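(* Let $\mu\in(0,1/2)$ and $\varepsilon\in(0,1)$. If $u(f)$ is a solution of the Euler–Lagrange equations of the modified Lagrangian $\mathcal{L}(u,u',f)$ defined below, with initial data $u(0),u'(0)$ satisfying $u(0)\neq 0$ and $l(u(0),u'(0))=0$, then $u(f)$ is also a solution of the Euler–Lagrange equations of $\mathscr{L}(u,u',f)$ (defined below), as long as $u(f)\neq 0$.
   Context: Primes denote derivatives with respect to $f\in\mathbb{R}$. For $q\in\mathbb{R}^3\setminus\{0,(-1,0,0)\}$, $q'\in\mathbb{R}^3$, let $$\widetilde{L}(q,q',f)=\tfrac12\|q'\|^2+q_1q_2'-q_2q_1'+\frac{1}{1+\varepsilon\cos f}\Big[(1-\mu)\Big(\frac{1}{\|q+(1,0,0)\|}+q_1\Big)+\frac{\mu}{\|q\|}+\tfrac12\big(q_1^2+q_2^2-q_3^2\varepsilon\cos f\big)\Big].$$ Let $\pi:\mathbb{R}^4\to\mathbb{R}^3$, $\pi(u)=(u_1^2-u_2^2-u_3^2+u_4^2,\;2u_1u_2-2u_3u_4,\;2u_1u_3+2u_2u_4)$ (the Kustaanheimo–Stiefel map). Define $\mathscr{L}(u,u',f)=\widetilde{L}\big(\pi(u),\tfrac{\partial\pi}{\partial u}(u)u',f\big)$, the bilinear form $l(u,u')=u_4u_1'-u_3u_2'+u_2u_3'-u_1u_4'$, and the modified Lagrangian $\mathcal{L}(u,u',f)=\mathscr{L}(u,u',f)+2\,l(u,u')^2$. *)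

theory Defs
  imports "HOL-Analysis.Analysis"
begin

text \<open>The Lagrangian \<open>L~(q,q',f)\<close> of the restricted three-body problem in rotating-pulsating
  coordinates, with parameters mu and eps.\<close>
definition Ltilde :: "real \<Rightarrow> real \<Rightarrow> real^3 \<Rightarrow> real^3 \<Rightarrow> real \<Rightarrow> real" where
  "Ltilde mu eps q q' f =
     (1/2) * (norm q')^2 + q$1 * q'$2 - q$2 * q'$1
     + (1 / (1 + eps * cos f)) *
       ((1 - mu) * (1 / norm (q + vector [1, 0, 0]) + q$1) + mu / norm q
        + (1/2) * ((q$1)^2 + (q$2)^2 - (q$3)^2 * eps * cos f))"

definition KS :: "real^4 \<Rightarrow> real^3" where
  "KS u = vector [ (u$1)^2 - (u$2)^2 - (u$3)^2 + (u$4)^2,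
                   2 * u$1 * u$2 - 2 * u$3 * u$4,
                   2 * u$1 * u$3 + 2 * u$2 * u$4 ]"

definition KS_jac :: "real^4 \<Rightarrow> real^4 \<Rightarrow> real^3" where
  "KS_jac u v = vector [ 2 * u$1 * v$1 - 2 * u$2 * v$2 - 2 * u$3 * v$3 + 2 * u$4 * v$4,
                         2 * v$1 * u$2 + 2 * u$1 * v$2 - 2 * v$3 * u$4 - 2 * u$3 * v$4,
                         2 * v$1 * u$3 + 2 * u$1 * v$3 + 2 * v$2 * u$4 + 2 * u$2 * v$4 ]"

definition Lscript :: "real \<Rightarrow> real \<Rightarrow> real^4 \<Rightarrow> real^4 \<Rightarrow> real \<Rightarrow> real" where
  "Lscript mu eps u v f = Ltilde mu eps (KS u) (KS_jac u v) f"

definition bil :: "real^4 \<Rightarrow> real^4 \<Rightarrow> real" where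
  "bil u v = u$4 * v$1 - u$3 * v$2 + u$2 * v$3 - u$1 * v$4"

definition Lmod :: "real \<Rightarrow> real \<Rightarrow> real^4 \<Rightarrow> real^4 \<Rightarrow> real \<Rightarrow> real" where
  "Lmod mu eps u v f = Lscript mu eps u v f + 2 * (bil u v)^2"

definition pd_x :: "(real^4 \<Rightarrow> real^4 \<Rightarrow> real \<Rightarrow> real) \<Rightarrow> 4 \<Rightarrow> real^4 \<Rightarrow> real^4 \<Rightarrow> real \<Rightarrow> real" where
  "pd_x L i x v t = deriv (\<lambda>s. L (x + s *\<^sub>R axis i 1) v t) 0"

definition pd_v :: "(real^4 \<Rightarrow> real^4 \<Rightarrow> real \<Rightarrow> real) \<Rightarrow> 4 \<Rightarrow> real^4 \<Rightarrow> real^4 \<Rightarrow> real \<Rightarrow> real" where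
  "pd_v L i x v t = deriv (\<lambda>s. L x (v + s *\<^sub>R axis i 1) t) 0"

definition EL_solution :: "(real^4 \<Rightarrow> real^4 \<Rightarrow> real \<Rightarrow> real) \<Rightarrow> real set \<Rightarrow> (real \<Rightarrow> real^4) \<Rightarrow> bool" where
  "EL_solution L I u \<longleftrightarrow>
     (\<forall>t\<in>I. u differentiable at t \<and> (\<lambda>s. vector_derivative u (at s)) differentiable at t) \<and>
     (\<forall>t\<in>I. \<forall>i. ((\<lambda>s. pd_v L i (u s) (vector_derivative u (at s)) s)
                     has_real_derivative pd_x L i (u t) (vector_derivative u (at t)) t) (at t))"

end

theory Submission
  imports Defs
begin

(*
  The Kustaanheimo-Stiefel map is invariant under the circle action
  u \<mapsto> cos s u + sin s J u on R^4, where J is the generator with l(u, v) = <J u, v>;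
  so are its Jacobian and the bilinear form l, hence so is the modified Lagrangian.
  By Noether's theorem the momentum of a solution paired with J u is conserved.
  Because the Jacobian of KS annihilates J u, the contribution of the unmodified
  Lagrangian to this charge vanishes, and the charge equals 4 l(u, u') |u|^2. It is
  zero initially, so l(u, u') = 0 as long as u \<noteq> 0. Since the extra term 2 l^2 is
  quadratic in l, both Lagrangians have the same partial derivatives wherever l = 0,
  so the Euler-Lagrange equations coincide along u.
*)

lemma differentiable_vec_nth [derivative_intros]:
  "f differentiable F \<Longrightarrow> (\<lambda>z. f z $ i) differentiable F"
  unfolding differentiable_def
  using bounded_linear.has_derivative[OF bounded_linear_vec_nth] by blast

lemma differentiable_fst [derivative_intros]: "f differentiable F \<Longrightarrow> (\<lambda>z. fst (f z)) differentiable F"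
  unfolding differentiable_def using has_derivative_fst by blast

lemma differentiable_snd [derivative_intros]: "f differentiable F \<Longrightarrow> (\<lambda>z. snd (f z)) differentiable F"
  unfolding differentiable_def using has_derivative_snd by blast

lemma differentiable_norm_compose_at [derivative_intros]:
  fixes f :: "'a::real_normed_vector \<Rightarrow> 'b::real_inner"
  shows "f differentiable at x \<Longrightarrow> f x \<noteq> 0 \<Longrightarrow> (\<lambda>z. norm (f z)) differentiable at x"
  by (rule differentiable_compose[where f=norm]) simp_all

lemma deriv_line_eq_frechet:
  fixes f :: "'a::real_normed_vector \<Rightarrow> real"
  assumes "(f has_derivative D) (at p)"
  shows "deriv (\<lambda>s. f (p + s *\<^sub>R w)) 0 = D w"
proof -
  have line: "((\<lambda>s. p + s *\<^sub>R w) has_derivative (\<lambda>h. h *\<^sub>R w)) (at 0)"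
    by (auto intro!: derivative_eq_intros)
  have "((\<lambda>s. f (p + s *\<^sub>R w)) has_derivative (\<lambda>h. D (h *\<^sub>R w))) (at 0)"
    using has_derivative_compose[OF line, of f D] assms by simp
  moreover have "(\<lambda>h. D (h *\<^sub>R w)) = (*) (D w)"
    using linear_scale[OF has_derivative_linear[OF assms]] by (auto simp: fun_eq_iff)
  ultimately show ?thesis
    by (intro DERIV_imp_deriv) (simp add: has_field_derivative_def)
qed

lemma partials_eq_frechet:
  assumes "((\<lambda>p. L (fst p) (snd p) t) has_derivative D) (at (x, v))"
  shows "pd_x L i x v t = D (axis i 1, 0)" and "pd_v L i x v t = D (0, axis i 1)"
  using deriv_line_eq_frechet[OF assms, of "(axis i 1, 0)"] deriv_line_eq_frechet[OF assms, of "(0, axis i 1)"]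
  by (simp_all add: pd_x_def pd_v_def)

lemma frechet_eq_sum_partials:
  assumes "((\<lambda>p. L (fst p) (snd p) t) has_derivative D) (at (x, v))"
  shows "D (a, b) = (\<Sum>i\<in>UNIV. a $ i * pd_x L i x v t + b $ i * pd_v L i x v t)"
proof -
  have lin: "linear D" using assms has_derivative_linear by blast
  have "(a, b) = (\<Sum>i\<in>UNIV. a $ i *\<^sub>R (axis i 1, 0) + b $ i *\<^sub>R (0, axis i 1))"
    by (simp add: sum_4 prod_eq_iff vec_eq_iff forall_4 axis_def)
  then have "D (a, b) = (\<Sum>i\<in>UNIV. a $ i * D (axis i 1, 0) + b $ i * D (0, axis i 1))"
    by (simp only: linear_sum[OF lin] linear_add[OF lin] linear_scale[OF lin] real_scaleR_def)
  then show ?thesis by (simp add: partials_eq_frechet[where L=L, OF assms])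
qed

lemma sum_partials_eq_0_if_invariant:
  assumes "(\<lambda>p. L (fst p) (snd p) t) differentiable at (x, v)"
    and "(\<gamma> has_vector_derivative (a, b)) (at 0)" "\<gamma> 0 = (x, v)"
    and "\<And>s. L (fst (\<gamma> s)) (snd (\<gamma> s)) t = L x v t"
  shows "(\<Sum>i\<in>UNIV. a $ i * pd_x L i x v t + b $ i * pd_v L i x v t) = 0"
proof -
  obtain D where D: "((\<lambda>p. L (fst p) (snd p) t) has_derivative D) (at (x, v))"
    using assms(1) unfolding differentiable_def by blast
  have "((\<lambda>s. L (fst (\<gamma> s)) (snd (\<gamma> s)) t) has_derivative (\<lambda>h. D (h *\<^sub>R (a, b)))) (at 0)"
    using has_derivative_compose[of \<gamma> _ 0 UNIV "\<lambda>p. L (fst p) (snd p) t" D] assms(2,3) D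
    by (simp add: has_vector_derivative_def)
  moreover have "((\<lambda>s. L (fst (\<gamma> s)) (snd (\<gamma> s)) t) has_derivative (\<lambda>h. 0)) (at 0)"
    by (simp add: assms(4))
  ultimately have "(\<lambda>h. D (h *\<^sub>R (a, b))) = (\<lambda>h. 0)"
    using has_derivative_unique by blast
  then have "D (a, b) = 0" by (metis scaleR_one)
  then show ?thesis using frechet_eq_sum_partials[where L=L, OF D] by simp
qed

lemma partials_add:
  assumes "(\<lambda>p. L (fst p) (snd p) t) differentiable at (x, v)"
    and "(\<lambda>p. M (fst p) (snd p) t) differentiable at (x, v)"
  shows "pd_x (\<lambda>x v t. L x v t + M x v t) i x v t = pd_x L i x v t + pd_x M i x v t"
    and "pd_v (\<lambda>x v t. L x v t + M x v t) i x v t = pd_v L i x v t + pd_v M i x v t"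
proof -
  obtain D1 D2 where
    D1: "((\<lambda>p. L (fst p) (snd p) t) has_derivative D1) (at (x, v))" and
    D2: "((\<lambda>p. M (fst p) (snd p) t) has_derivative D2) (at (x, v))"
    using assms unfolding differentiable_def by blast
  note D = has_derivative_add[OF D1 D2]
  show "pd_x (\<lambda>x v t. L x v t + M x v t) i x v t = pd_x L i x v t + pd_x M i x v t"
    and "pd_v (\<lambda>x v t. L x v t + M x v t) i x v t = pd_v L i x v t + pd_v M i x v t"
    by (simp_all add: partials_eq_frechet[where L="\<lambda>x v t. L x v t + M x v t", OF D]
        partials_eq_frechet[where L=L, OF D1] partials_eq_frechet[where L=M, OF D2])
qed

definition noether_charge ::
  "(real^4 \<Rightarrow> real^4 \<Rightarrow> real \<Rightarrow> real) \<Rightarrow> (real^4 \<Rightarrow> real^4) \<Rightarrow> (real \<Rightarrow> real^4) \<Rightarrow> real \<Rightarrow> real"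
where
  "noether_charge L X u t = (\<Sum>i\<in>UNIV. pd_v L i (u t) (vector_derivative u (at t)) t * X (u t) $ i)"

lemma noether_charge_constant:
  assumes EL: "EL_solution L I u" and "linear X" and "is_interval I"
    \<comment> \<open>infinitesimal invariance of L under the flow of X, lifted to velocities\<close>
    and invariance: "\<And>t. t \<in> I \<Longrightarrow>
      (\<Sum>i\<in>UNIV. X (u t) $ i * pd_x L i (u t) (vector_derivative u (at t)) t
                + X (vector_derivative u (at t)) $ i * pd_v L i (u t) (vector_derivative u (at t)) t) = 0"
    and "s \<in> I" "t \<in> I"
  shows "noether_charge L X u s = noether_charge L X u t"
proof -
  define u' where "u' t = vector_derivative u (at t)" for t
  have "(noether_charge L X u has_real_derivative 0) (at t)" if "t \<in> I" for t
  proof -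
    have u: "(u has_vector_derivative u' t) (at t)"
      using EL that vector_derivative_works unfolding EL_solution_def u'_def by blast
    have X_i: "bounded_linear (\<lambda>y. X y $ i)" for i
      using \<open>linear X\<close> by (intro bounded_linear_compose[OF bounded_linear_vec_nth]) (simp add: linear_conv_bounded_linear)
    have X_u: "((\<lambda>s. X (u s) $ i) has_real_derivative X (u' t) $ i) (at t)" for i
      using bounded_linear.has_vector_derivative[OF X_i u]
      by (simp add: has_real_derivative_iff_has_vector_derivative)
    have pd_v_u: "((\<lambda>s. pd_v L i (u s) (u' s) s) has_real_derivative pd_x L i (u t) (u' t) t) (at t)" for i
      using EL that unfolding EL_solution_def u'_def by blast
    have "(noether_charge L X u has_real_derivative
        (\<Sum>i\<in>UNIV. pd_x L i (u t) (u' t) t * X (u t) $ i + pd_v L i (u t) (u' t) t * X (u' t) $ i)) (at t)"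
      unfolding noether_charge_def u'_def[symmetric]
      by (intro DERIV_sum DERIV_mult'[OF pd_v_u X_u, THEN DERIV_cong]) simp
    then show ?thesis
      using invariance[OF that] by (simp add: u'_def mult.commute)
  qed
  then show ?thesis
    using has_field_derivative_zero_constant[of I "noether_charge L X u"] \<open>is_interval I\<close> assms(5,6)
    by (metis has_field_derivative_at_within is_interval_convex)
qed

lemma EL_solution_cong_partials:
  assumes EL: "EL_solution L I u" and "open I"
    and pd_x_eq: "\<And>t i. t \<in> I \<Longrightarrow>
      pd_x L i (u t) (vector_derivative u (at t)) t = pd_x M i (u t) (vector_derivative u (at t)) t"
    and pd_v_eq: "\<And>t i. t \<in> I \<Longrightarrow>
      pd_v L i (u t) (vector_derivative u (at t)) t = pd_v M i (u t) (vector_derivative u (at t)) t"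
  shows "EL_solution M I u"
  unfolding EL_solution_def
proof (intro conjI ballI allI)
  fix t i assume "t \<in> I"
  then have "((\<lambda>s. pd_v L i (u s) (vector_derivative u (at s)) s) has_real_derivative
      pd_x L i (u t) (vector_derivative u (at t)) t) (at t)"
    using EL unfolding EL_solution_def by blast
  then show "((\<lambda>s. pd_v M i (u s) (vector_derivative u (at s)) s) has_real_derivative
      pd_x M i (u t) (vector_derivative u (at t)) t) (at t)"
    using has_field_derivative_transform_within_open[OF _ \<open>open I\<close> \<open>t \<in> I\<close>] pd_v_eq pd_x_eq[OF \<open>t \<in> I\<close>]
    by simp
qed (use EL in \<open>auto simp: EL_solution_def\<close>)

definition fibre_gen :: "real^4 \<Rightarrow> real^4" where
  "fibre_gen x = (\<chi> i. bil x (axis i 1))"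

lemma fibre_gen_nth [simp]:
  "fibre_gen x $ 1 = x$4" "fibre_gen x $ 2 = - x$3" "fibre_gen x $ 3 = x$2" "fibre_gen x $ 4 = - x$1"
  by (simp_all add: fibre_gen_def bil_def axis_def)

lemma linear_fibre_gen: "linear fibre_gen"
  by (rule linearI) (simp_all add: vec_eq_iff forall_4)

lemma sum_fibre_gen_squared: "(\<Sum>i\<in>UNIV. (fibre_gen x $ i)^2) = (norm x)^2"
  unfolding power2_norm_eq_inner by (simp add: inner_vec_def sum_4 power2_eq_square)

lemma norm_KS: "norm (KS x) = (norm x)^2"
proof -
  have "(norm (KS x))^2 = ((norm x)^2)^2"
    by (simp add: power2_norm_eq_inner inner_vec_def sum_3 sum_4 KS_def) algebra
  then show ?thesis by (rule power2_eq_imp_eq) simp_all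
qed

definition fibre_rot :: "real \<Rightarrow> real^4 \<Rightarrow> real^4" where
  "fibre_rot s x = cos s *\<^sub>R x + sin s *\<^sub>R fibre_gen x"

lemma
  shows KS_fibre_rot: "KS (fibre_rot s x) = KS x"
    and KS_jac_fibre_rot: "KS_jac (fibre_rot s x) (fibre_rot s v) = KS_jac x v"
    and bil_fibre_rot: "bil (fibre_rot s x) (fibre_rot s v) = bil x v"
proof -
  have cs: "(cos s)^2 + (sin s)^2 = 1" by simp
  show "KS (fibre_rot s x) = KS x"
    by (simp add: KS_def fibre_rot_def vec_eq_iff forall_3; use cs in algebra)
  show "KS_jac (fibre_rot s x) (fibre_rot s v) = KS_jac x v"
    by (simp add: KS_jac_def fibre_rot_def vec_eq_iff forall_3; use cs in algebra)
  show "bil (fibre_rot s x) (fibre_rot s v) = bil x v"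
    by (simp add: bil_def fibre_rot_def; use cs in algebra)
qed

lemma KS_jac_fibre_gen: "KS_jac x (fibre_gen x) = 0"
  by (simp add: KS_jac_def vec_eq_iff forall_3)

lemma linear_KS_jac: "linear (KS_jac x)"
  by (rule linearI) (simp_all add: KS_jac_def vec_eq_iff forall_3 algebra_simps)

lemma vector_3_eq_axis_sum:
  "(vector [a, b, c] :: real^3) = a *\<^sub>R axis 1 1 + b *\<^sub>R axis 2 1 + c *\<^sub>R axis 3 1"
  by (simp add: vec_eq_iff forall_3 axis_def)

lemma KS_KS_jac_differentiable:
  "(\<lambda>p::(real^4) \<times> (real^4). (KS (fst p), KS_jac (fst p) (snd p))) differentiable at z"
  unfolding KS_def KS_jac_def vector_3_eq_axis_sum by (intro derivative_intros)

lemma Ltilde_differentiable: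
  assumes "q \<noteq> 0" "q \<noteq> vector [-1, 0, 0]"
  shows "(\<lambda>p. Ltilde mu eps (fst p) (snd p) f) differentiable at (q, q')"
proof -
  have "q + vector [1, 0, 0] \<noteq> 0"
    using assms(2) by (auto simp: vec_eq_iff forall_3)
  then show ?thesis
    unfolding Ltilde_def power2_norm_eq_inner
    by (intro derivative_intros differentiable_inner) (auto simp: assms)
qed

lemma Lscript_differentiable:
  assumes "x \<noteq> 0" "KS x \<noteq> vector [-1, 0, 0]"
  shows "(\<lambda>p. Lscript mu eps (fst p) (snd p) t) differentiable at (x, v)"
proof -
  have "KS x \<noteq> 0" using assms(1) norm_KS[of x] by auto
  then show ?thesis
    unfolding Lscript_def
    using differentiable_compose[OF Ltilde_differentiable KS_KS_jac_differentiable] assms(2)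
    by simp
qed

lemma Lmod_eq: "Lmod mu eps = (\<lambda>x v t. Lscript mu eps x v t + 2 * (bil x v)^2)"
  by (simp add: fun_eq_iff Lmod_def)

lemma bil_squared_differentiable:
  "(\<lambda>p. 2 * (bil (fst p) (snd p))^2) differentiable at z"
  unfolding bil_def by (intro derivative_intros)

lemma bil_add_scaleR:
  "bil (x + s *\<^sub>R w) v = bil x v + s * bil w v" "bil x (v + s *\<^sub>R w) = bil x v + s * bil x w"
  by (simp_all add: bil_def algebra_simps)

lemma partials_bil_squared:
  shows "pd_x (\<lambda>x v t. 2 * (bil x v)^2) i x v t = 4 * bil x v * bil (axis i 1) v"
    and "pd_v (\<lambda>x v t. 2 * (bil x v)^2) i x v t = 4 * bil x v * fibre_gen x $ i"
proof -
  have "deriv (\<lambda>s. 2 * (c + s * d)^2) 0 = 4 * c * d" for c d :: real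
    by (rule DERIV_imp_deriv) (auto intro!: derivative_eq_intros)
  then show "pd_x (\<lambda>x v t. 2 * (bil x v)^2) i x v t = 4 * bil x v * bil (axis i 1) v"
    and "pd_v (\<lambda>x v t. 2 * (bil x v)^2) i x v t = 4 * bil x v * fibre_gen x $ i"
    by (simp_all add: pd_x_def pd_v_def bil_add_scaleR fibre_gen_def)
qed

lemma Lmod_differentiable:
  assumes "x \<noteq> 0" "KS x \<noteq> vector [-1, 0, 0]"
  shows "(\<lambda>p. Lmod mu eps (fst p) (snd p) t) differentiable at (x, v)"
  unfolding Lmod_def
  using Lscript_differentiable[OF assms] bil_squared_differentiable by (rule differentiable_add)

lemma partials_Lmod:
  assumes "x \<noteq> 0" "KS x \<noteq> vector [-1, 0, 0]"
  shows "pd_x (Lmod mu eps) i x v t = pd_x (Lscript mu eps) i x v t + 4 * bil x v * bil (axis i 1) v"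
    and "pd_v (Lmod mu eps) i x v t = pd_v (Lscript mu eps) i x v t + 4 * bil x v * fibre_gen x $ i"
  using partials_add[where L="Lscript mu eps" and M="\<lambda>x v t. 2 * (bil x v)^2",
      OF Lscript_differentiable[OF assms] bil_squared_differentiable]
  by (simp_all add: Lmod_eq partials_bil_squared)

lemma Lscript_fibre_gen_momentum:
  assumes "x \<noteq> 0" "KS x \<noteq> vector [-1, 0, 0]"
  shows "(\<Sum>i\<in>UNIV. pd_v (Lscript mu eps) i x v t * fibre_gen x $ i) = 0"
proof -
  have "(\<Sum>i\<in>UNIV. 0 $ i * pd_x (Lscript mu eps) i x v t
                    + fibre_gen x $ i * pd_v (Lscript mu eps) i x v t) = 0"
  proof (rule sum_partials_eq_0_if_invariant[OF Lscript_differentiable[OF assms]])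
    show "((\<lambda>s. (x, v + s *\<^sub>R fibre_gen x)) has_vector_derivative (0, fibre_gen x)) (at 0)"
      by (auto intro!: derivative_eq_intros simp: has_vector_derivative_def)
    show "Lscript mu eps (fst (x, v + s *\<^sub>R fibre_gen x)) (snd (x, v + s *\<^sub>R fibre_gen x)) t
        = Lscript mu eps x v t" for s
      by (simp add: Lscript_def linear_add[OF linear_KS_jac] linear_scale[OF linear_KS_jac] KS_jac_fibre_gen)
  qed simp
  then show ?thesis by (simp add: mult.commute)
qed

lemma Lmod_fibre_gen_momentum:
  assumes "x \<noteq> 0" "KS x \<noteq> vector [-1, 0, 0]"
  shows "(\<Sum>i\<in>UNIV. pd_v (Lmod mu eps) i x v t * fibre_gen x $ i) = 4 * bil x v * (norm x)^2"
proof -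
  have "(\<Sum>i\<in>UNIV. pd_v (Lmod mu eps) i x v t * fibre_gen x $ i)
      = (\<Sum>i\<in>UNIV. pd_v (Lscript mu eps) i x v t * fibre_gen x $ i)
        + 4 * bil x v * (\<Sum>i\<in>UNIV. (fibre_gen x $ i)^2)"
    by (simp add: partials_Lmod[OF assms] distrib_right sum.distrib sum_distrib_left
        power2_eq_square mult.assoc)
  then show ?thesis by (simp add: Lscript_fibre_gen_momentum[OF assms] sum_fibre_gen_squared)
qed

lemma Lmod_fibre_rot_invariance:
  assumes "x \<noteq> 0" "KS x \<noteq> vector [-1, 0, 0]"
  shows "(\<Sum>i\<in>UNIV. fibre_gen x $ i * pd_x (Lmod mu eps) i x v t
                    + fibre_gen v $ i * pd_v (Lmod mu eps) i x v t) = 0"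
proof (rule sum_partials_eq_0_if_invariant[OF Lmod_differentiable[OF assms]])
  show "((\<lambda>s. (fibre_rot s x, fibre_rot s v)) has_vector_derivative (fibre_gen x, fibre_gen v)) (at 0)"
    unfolding fibre_rot_def has_vector_derivative_def
    by (auto intro!: derivative_eq_intros simp: fun_eq_iff)
  show "Lmod mu eps (fst (fibre_rot s x, fibre_rot s v)) (snd (fibre_rot s x, fibre_rot s v)) t
      = Lmod mu eps x v t" for s
    by (simp add: Lmod_def Lscript_def KS_fibre_rot KS_jac_fibre_rot bil_fibre_rot)
qed (simp add: fibre_rot_def)

lemma Lmod_solution_conserves_bil_norm:
  assumes EL: "EL_solution (Lmod mu eps) I u" and "is_interval I"
    and regular: "\<And>t. t \<in> I \<Longrightarrow> u t \<noteq> 0" "\<And>t. t \<in> I \<Longrightarrow> KS (u t) \<noteq> vector [-1, 0, 0]"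
    and "s \<in> I" "t \<in> I"
  shows "bil (u s) (vector_derivative u (at s)) * (norm (u s))^2
       = bil (u t) (vector_derivative u (at t)) * (norm (u t))^2"
proof -
  have "noether_charge (Lmod mu eps) fibre_gen u s = noether_charge (Lmod mu eps) fibre_gen u t"
    using noether_charge_constant[OF EL linear_fibre_gen \<open>is_interval I\<close>]
      Lmod_fibre_rot_invariance[OF regular] assms(5,6) by blast
  then show ?thesis
    unfolding noether_charge_def
    using Lmod_fibre_gen_momentum[OF regular] assms(5,6) by simp
qed

theorem proposition3:
  fixes mu eps :: real and u :: "real \<Rightarrow> real^4" and I :: "real set"
  assumes "0 < mu" "mu < 1/2" "0 < eps" "eps < 1"
    and "open I" "is_interval I" "0 \<in> I"
    and "\<forall>t\<in>I. u t \<noteq> 0 \<and> KS (u t) \<noteq> vector [-1, 0, 0]"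
    and "EL_solution (Lmod mu eps) I u"
    and "bil (u 0) (vector_derivative u (at 0)) = 0"
  shows "EL_solution (Lscript mu eps) I u"
proof -
  have regular: "u t \<noteq> 0" "KS (u t) \<noteq> vector [-1, 0, 0]" if "t \<in> I" for t
    using assms(8) that by auto
  have bil_0: "bil (u t) (vector_derivative u (at t)) = 0" if "t \<in> I" for t
    using Lmod_solution_conserves_bil_norm[OF assms(9,6) regular that assms(7)] assms(10)
      regular(1)[OF that] by simp
  show ?thesis
    by (rule EL_solution_cong_partials[OF assms(9,5)]) (simp_all add: partials_Lmod regular bil_0)
qed

end
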